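(* For every share function $\rho$, the $\rho$-blame $\mathbf B^\rho$ is an unbiased importance value function.
   Context: $X$ is a fixed finite set of $n=|X|$ variables. An assignment over $U\subseteq X$ is a map $\mathbf u:U\to\{0,1\}$; $\mathbf u;\mathbf v$ is concatenation of assignments with disjoint domains, $\mathbf u_S$ is restriction. For $S\subseteq X$ and $\mathbf u$ over $X$, $\mathbf u^{\oplus S}$ flips the values of the variables in $S$. $\mathbb B(X)$ is the set of Boolean functions $\{0,1\}^X\to\{0,1\}$, combined pointwise by $\lor,\land$ (juxtaposition), $\oplus$, negation $\overline f$; a variable $x$ also denotes $\mathbf u\mapsto\mathbf u(x)$; $f\ge g$ is pointwise. Cofactor: $f_{\mathbf v}(\mathbf u)=f(\mathbf v;\mathbf u_{X\setminus V})$ for $\mathbf v$ over $V$; $f_{x/c}$ for $V=\{x\}$. $\mathrm{dep}(f)=\{x: f_{x/1}\ne f_{x/0}\}$; $f$ is monotone in $x$ if $f_{x/1}\ge f_{x/0}$. $f^{\oplus y}(\mathbf u)=f(\mathbf u^{\oplus\{y\}})$. For a permutation $\sigma$ of $X$: $(\sigma\mathbf u)(x)=\mathbf u(\sigma^{-1}(x))$, $(\sigma f)(\mathbf u)=f(\sigma^{-1}\mathbf u)$. $f[x/s]=s f_{x/1}\lor\overline s f_{x/0}$. Modularity: $f$ is modular in $g$ if $g$ is not constant and there are $\ell\in\mathbb B(X)$, $z\in X$ with $\mathrm{dep}(\ell)\cap\mathrm{dep}(g)=\emptyset$ and $f=\ell[z/g]$; monotonically modular if moreover $\ell$ is monotone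 in $z$. Then $f_{g/1}:=\ell_{z/1}$, $f_{g/0}:=\ell_{z/0}$ (well defined). A value function is a map $\mathfrak I:X\times\mathbb B(X)\to\mathbb R$, $(x,f)\mapsto\mathfrak I_x(f)$. It is an importance value function (IVF) if for all $x,y\in X$, permutations $\sigma$ of $X$ and $f,g,h\in\mathbb B(X)$: (Bound) $0\le\mathfrak I_x(f)\le1$; (Dum) $\mathfrak I_x(f)=0$ if $x\notin\mathrm{dep}(f)$; (Dic) $\mathfrak I_x(x)=\mathfrak I_x(\overline x)=1$; (Type) $\mathfrak I_x(f)=\mathfrak I_{\sigma(x)}(\sigma f)$ and $\mathfrak I_x(f)=\mathfrak I_x(f^{\oplus y})$; (ModEC) $\mathfrak I_x(f)\ge\mathfrak I_x(h)$ whenever $f$ and $h$ are monotonically modular in $g$, $f_{g/1}\ge h_{g/1}$, $h_{g/0}\ge f_{g/0}$, and $x\in\mathrm{dep}(g)$. $\mathfrak I$ is unbiased if $\mathfrak I_x(g)=\mathfrak I_x(\overline g)$ for all $x,g$. Blame: for $f\in\mathbb B(X)$, $x\in X$ and $\mathbf u$ over $X$, a critical set of $x$ in $f$ under $\mathbf u$ is a set $S\subseteq X\setminus\{x\}$ with $f(\mathbf u)=f(\mathbf u^{\oplus S})$ and $f(\mathbf u)\ne f(\mathbf u^{\oplus(S\cup\{x\})})$; $\mathrm{scs}^{\mathbf u}_x(f)$ is the minimum size of a critical set ($\infty$ if none exists). A share function is $\rho:\mathbb N\cup\{\infty\}\to\mathbb R$ that is monotonically decreasing with $\rho(\infty)=\lim_{k\to\infty}\rho(k)=0$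 and $\rho(0)=1$. The $\rho$-blame is $\mathbf B^\rho_x(f)=\mathbb E_{\mathbf u\in\{0,1\}^X}[\rho(\mathrm{scs}^{\mathbf u}_x(f))]$ (uniform distribution). *)

theory Defs
  imports Complex_Main "HOL-Library.Extended_Nat"
begin

type_synonym 'x assignment = "'x \<Rightarrow> bool"
type_synonym 'x boolfun = "('x \<Rightarrow> bool) \<Rightarrow> bool"

definition flip :: "'x set \<Rightarrow> 'x assignment \<Rightarrow> 'x assignment" where
  "flip S u = (\<lambda>x. if x \<in> S then \<not> u x else u x)"

definition cof :: "'x boolfun \<Rightarrow> 'x \<Rightarrow> bool \<Rightarrow> 'x boolfun" where
  "cof f x c = (\<lambda>u. f (u(x := c)))"

definition dep :: "'x boolfun \<Rightarrow> 'x set" where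
  "dep f = {x. cof f x True \<noteq> cof f x False}"

definition monotone_in :: "'x boolfun \<Rightarrow> 'x \<Rightarrow> bool" where
  "monotone_in f x \<longleftrightarrow> (\<forall>u. cof f x False u \<longrightarrow> cof f x True u)"

definition subst :: "'x boolfun \<Rightarrow> 'x \<Rightarrow> 'x boolfun \<Rightarrow> 'x boolfun" where
  "subst f x s = (\<lambda>u. (s u \<and> cof f x True u) \<or> (\<not> s u \<and> cof f x False u))"

definition flipfun :: "'x boolfun \<Rightarrow> 'x \<Rightarrow> 'x boolfun" where
  "flipfun f y = (\<lambda>u. f (flip {y} u))"

definition perm_asg :: "('x \<Rightarrow> 'x) \<Rightarrow> 'x assignment \<Rightarrow> 'x assignment" where
  "perm_asg \<sigma> u = (\<lambda>x. u (inv \<sigma> x))"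

definition perm_fun :: "('x \<Rightarrow> 'x) \<Rightarrow> 'x boolfun \<Rightarrow> 'x boolfun" where
  "perm_fun \<sigma> f = (\<lambda>u. f (perm_asg (inv \<sigma>) u))"

definition nonconstant :: "'x boolfun \<Rightarrow> bool" where
  "nonconstant g \<longleftrightarrow> (\<exists>u v. g u \<noteq> g v)"

definition mod_witness :: "'x boolfun \<Rightarrow> 'x boolfun \<Rightarrow> 'x boolfun \<Rightarrow> 'x \<Rightarrow> bool" where
  "mod_witness f g l z \<longleftrightarrow> dep l \<inter> dep g = {} \<and> f = subst l z g"

definition modular :: "'x boolfun \<Rightarrow> 'x boolfun \<Rightarrow> bool" where
  "modular f g \<longleftrightarrow> nonconstant g \<and> (\<exists>l z. mod_witness f g l z)"

definition mono_modular :: "'x boolfun \<Rightarrow> 'x boolfun \<Rightarrow> bool" where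
  "mono_modular f g \<longleftrightarrow> nonconstant g \<and> (\<exists>l z. mod_witness f g l z \<and> monotone_in l z)"

text \<open>f_{g/c} := l_{z/c} for a (any) modularity witness (l, z).\<close>
definition mod_cof :: "'x boolfun \<Rightarrow> 'x boolfun \<Rightarrow> bool \<Rightarrow> 'x boolfun" where
  "mod_cof f g c = (let (l, z) = (SOME (l, z). mod_witness f g l z) in cof l z c)"

type_synonym 'x value_fun = "'x \<Rightarrow> 'x boolfun \<Rightarrow> real"

definition IVF :: "'x value_fun \<Rightarrow> bool" where
  "IVF I \<longleftrightarrow>
     (\<forall>x f. 0 \<le> I x f \<and> I x f \<le> 1) \<and>
     (\<forall>x f. x \<notin> dep f \<longrightarrow> I x f = 0) \<and>
     (\<forall>x. I x (\<lambda>u. u x) = 1 \<and> I x (\<lambda>u. \<not> u x) = 1) \<and>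
     (\<forall>x f \<sigma>. bij \<sigma> \<longrightarrow> I x f = I (\<sigma> x) (perm_fun \<sigma> f)) \<and>
     (\<forall>x y f. I x f = I x (flipfun f y)) \<and>
     (\<forall>x f g h. mono_modular f g \<and> mono_modular h g
        \<and> mod_cof h g True \<le> mod_cof f g True
        \<and> mod_cof f g False \<le> mod_cof h g False
        \<and> x \<in> dep g \<longrightarrow> I x f \<ge> I x h)"

definition unbiased :: "'x value_fun \<Rightarrow> bool" where
  "unbiased I \<longleftrightarrow> (\<forall>x g. I x g = I x (\<lambda>u. \<not> g u))"

definition critical_set :: "'x boolfun \<Rightarrow> 'x \<Rightarrow> 'x assignment \<Rightarrow> 'x set \<Rightarrow> bool" where
  "critical_set f x u S \<longleftrightarrow> x \<notin> S \<and> f u = f (flip S u) \<and> f u \<noteq> f (flip (S \<union> {x}) u)"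

text \<open>Minimum size of a critical set; \<infinity> (= Inf {}) if none exists.\<close>
definition scs :: "'x assignment \<Rightarrow> 'x \<Rightarrow> 'x boolfun \<Rightarrow> enat" where
  "scs u x f = Inf {enat (card S) | S. critical_set f x u S}"

definition share_function :: "(enat \<Rightarrow> real) \<Rightarrow> bool" where
  "share_function \<rho> \<longleftrightarrow> antimono \<rho> \<and> \<rho> \<infinity> = 0 \<and>
     ((\<lambda>k::nat. \<rho> (enat k)) \<longlonglongrightarrow> 0) \<and> \<rho> 0 = 1"

definition blame :: "(enat \<Rightarrow> real) \<Rightarrow> ('x::finite) value_fun" where
  "blame \<rho> x f = (\<Sum>u\<in>(UNIV :: 'x assignment set). \<rho> (scs u x f))
                   / real (card (UNIV :: 'x assignment set))"

end

theory Submission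
  imports Defs
begin

text \<open>All axioms except ModEC follow from symmetries of critical sets or from computing them
  directly. For ModEC write \<open>f = g F\<^sub>1 \<or> \<not>g F\<^sub>0\<close> and \<open>h = g H\<^sub>1 \<or> \<not>g H\<^sub>0\<close> with the cofactors
  of the two witnesses, so that \<open>F\<^sub>0 \<le> H\<^sub>0 \<le> H\<^sub>1 \<le> F\<^sub>1\<close> and none of them depends on x. Wherever x
  is pivotal for h, f then agrees with h at both ends. Hence where f and h agree, every critical
  set of x in h is critical in f; where they differ, either g changes when x is flipped, and \<open>{}\<close>
  is critical in f at u and at \<open>u\<^sup>\<oplus>\<^sup>x\<close>, or the critical sets of h at \<open>u\<^sup>\<oplus>\<^sup>x\<close> are critical
  in f at u and vice versa. So on every pair \<open>{u, u\<^sup>\<oplus>\<^sup>x}\<close> the shares of f are at least those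
  of h, and averaging over the pairs gives the blame inequality.\<close>

lemma flip_commute: "flip A (flip B u) = flip B (flip A u)"
  by (auto simp: flip_def fun_eq_iff)

lemma flip_singleton_flip_singleton [simp]: "flip {x} (flip {x} u) = u"
  by (auto simp: flip_def fun_eq_iff)

lemma flip_empty [simp]: "flip {} u = u"
  by (simp add: flip_def)

lemma flip_insert: "x \<notin> S \<Longrightarrow> flip (insert x S) u = flip {x} (flip S u)"
  by (auto simp: flip_def fun_eq_iff)

lemma flip_singleton_eq_fun_upd: "flip {x} u = u(x := \<not> u x)"
  by (auto simp: flip_def fun_eq_iff)

lemma sum_flip_singleton:
  "(\<Sum>u\<in>(UNIV :: ('x::finite) assignment set). F (flip {x} u)) = (\<Sum>u\<in>UNIV. F u)"
  by (rule sum.reindex_bij_witness[of _ "flip {x}" "flip {x}"]) auto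

lemma fun_upd_notin_dep: "x \<notin> dep F \<Longrightarrow> F (u(x := b)) = F u"
proof -
  assume "x \<notin> dep F"
  then have "F (w(x := True)) = F (w(x := False))" for w
    by (auto simp: dep_def cof_def fun_eq_iff)
  moreover have "F u = F (u(x := u x))" by simp
  ultimately show ?thesis by (cases b; cases "u x") auto
qed

lemma flip_notin_dep: "x \<notin> dep F \<Longrightarrow> F (flip {x} u) = F u"
  by (simp add: flip_singleton_eq_fun_upd fun_upd_notin_dep)

lemma eq_if_eq_on_dep_finite_diff:
  assumes "finite {y. a y \<noteq> b y}" and "\<forall>y\<in>dep F. a y = b y"
  shows "F a = F b"
proof -
  have "\<And>a. {y. a y \<noteq> b y} \<subseteq> D \<Longrightarrow> \<forall>y\<in>dep F. a y = b y \<Longrightarrow> F a = F b"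
    if "finite D" for D
    using that
  proof (induction D rule: finite_induct)
    case empty
    then show ?case by (simp add: fun_eq_iff)
  next
    case (insert d D a)
    have "{y. (a(d := b d)) y \<noteq> b y} \<subseteq> D"
      using insert.prems(1) by auto
    moreover have "\<forall>y\<in>dep F. (a(d := b d)) y = b y"
      using insert.prems(2) by simp
    ultimately have "F (a(d := b d)) = F b" by (rule insert.IH)
    moreover have "F (a(d := b d)) = F a"
      using insert.prems(2) fun_upd_notin_dep[of d F a "b d"]
      by (cases "d \<in> dep F") (simp_all add: fun_upd_idem)
    ultimately show ?case by simp
  qed
  then show ?thesis using assms by blast
qed

lemma eq_if_eq_on_dep: "\<forall>y\<in>dep F. a y = b y \<Longrightarrow> F a = F (b :: ('x::finite) assignment)"
  using eq_if_eq_on_dep_finite_diff[of a b F] by simp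

lemma dep_cof_subset: "dep (cof l z c) \<subseteq> dep l"
proof
  fix y assume "y \<in> dep (cof l z c)"
  then have "y \<noteq> z" by (auto simp: dep_def cof_def)
  show "y \<in> dep l"
  proof (rule ccontr)
    assume "y \<notin> dep l"
    then have "l ((u(z := c))(y := b)) = l (u(z := c))" for u b
      by (rule fun_upd_notin_dep)
    then have "cof l z c (u(y := b)) = cof l z c u" for u b
      using \<open>y \<noteq> z\<close> by (simp add: cof_def fun_upd_twist)
    then show False using \<open>y \<in> dep (cof l z c)\<close> by (auto simp: dep_def cof_def fun_eq_iff)
  qed
qed

lemma mod_witness_cof_eq:
  fixes f g l :: "('x::finite) boolfun"
  assumes w: "mod_witness f g l z" and "g v = c"
  shows "cof l z c u = f (\<lambda>y. if y \<in> dep g then v y else u y)"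
proof -
  let ?w = "\<lambda>y. if y \<in> dep g then v y else u y"
  have disj: "dep l \<inter> dep g = {}" and f_eq: "f = subst l z g"
    using w by (auto simp: mod_witness_def)
  have "g ?w = c" using eq_if_eq_on_dep[of g ?w v] \<open>g v = c\<close> by simp
  then have "f ?w = cof l z c ?w" using f_eq by (cases c) (auto simp: subst_def)
  moreover have "cof l z c ?w = cof l z c u"
    using disj dep_cof_subset[of l z c] by (intro eq_if_eq_on_dep[of "cof l z c"]) auto
  ultimately show ?thesis by simp
qed

lemma mod_cof_eq:
  fixes f g l :: "('x::finite) boolfun"
  assumes "mod_witness f g l z" and "nonconstant g"
  shows "mod_cof f g c = cof l z c"
proof -
  let ?P = "\<lambda>(l, z). mod_witness f g l z"
  obtain l' z' where some: "(SOME p. ?P p) = (l', z')" by fastforce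
  have w': "mod_witness f g l' z'"
    using someI[of ?P "(l, z)"] assms(1) some by simp
  obtain v where "g v = c"
    using \<open>nonconstant g\<close> unfolding nonconstant_def by (cases c) blast+
  then have "cof l' z' c = cof l z c"
    using mod_witness_cof_eq[OF w'] mod_witness_cof_eq[OF assms(1)] by (auto simp: fun_eq_iff)
  then show ?thesis unfolding mod_cof_def some by simp
qed

lemma critical_set_iff:
  "critical_set F x v S \<longleftrightarrow> x \<notin> S \<and> F v = F (flip S v) \<and> F v \<noteq> F (flip {x} (flip S v))"
proof (cases "x \<in> S")
  case False
  then have "flip (S \<union> {x}) v = flip {x} (flip S v)"
    using flip_insert[OF False] by simp
  then show ?thesis by (simp only: critical_set_def)
qed (simp add: critical_set_def)

lemma critical_set_empty_iff: "critical_set f x u {} \<longleftrightarrow> f (flip {x} u) \<noteq> f u"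
  by (auto simp: critical_set_def)

lemma scs_le_if_critical_set_imp:
  "(\<And>S. critical_set h x u S \<Longrightarrow> critical_set f x v S) \<Longrightarrow> scs v x f \<le> scs u x h"
  unfolding scs_def by (rule Inf_superset_mono) blast

lemma scs_eq_0_if_critical_set_empty:
  fixes x :: 'x
  assumes "critical_set f x u {}"
  shows "scs u x f = 0"
proof -
  have "scs u x f \<le> enat (card ({} :: 'x set))"
    unfolding scs_def using assms by (intro Inf_lower) blast
  then show ?thesis by (simp add: enat_0)
qed

lemma scs_eq_infinity_if_notin_dep:
  assumes "x \<notin> dep f"
  shows "scs u x f = \<infinity>"
proof -
  have "\<not> critical_set f x u S" for S
    using flip_notin_dep[OF assms, of "flip S u"] by (auto simp: critical_set_iff)
  then show ?thesis unfolding scs_def by (simp add: top_enat_def[symmetric])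
qed

lemma scs_not: "scs u x (\<lambda>u. \<not> g u) = scs u x g"
  unfolding scs_def critical_set_def by simp

lemma scs_flipfun: "scs u x (flipfun f y) = scs (flip {y} u) x f"
  unfolding scs_def critical_set_def flipfun_def by (simp add: flip_commute[of "{y}"])

lemma critical_set_perm_fun:
  assumes "bij \<sigma>"
  shows "critical_set (perm_fun \<sigma> f) (\<sigma> x) v S = critical_set f x (v \<circ> \<sigma>) (\<sigma> -` S)"
proof -
  have perm_fun_eq: "perm_fun \<sigma> f w = f (w \<circ> \<sigma>)" for w
    using assms by (simp add: perm_fun_def perm_asg_def inv_inv_eq comp_def)
  have flip_comp: "flip T w \<circ> \<sigma> = flip (\<sigma> -` T) (w \<circ> \<sigma>)" for T w
    by (auto simp: flip_def fun_eq_iff)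
  have "\<sigma> -` (S \<union> {\<sigma> x}) = \<sigma> -` S \<union> {x}"
    using bij_is_inj[OF assms] by (auto dest: injD)
  then show ?thesis unfolding critical_set_def perm_fun_eq flip_comp by simp
qed

lemma scs_perm_fun:
  assumes "bij \<sigma>"
  shows "scs v (\<sigma> x) (perm_fun \<sigma> f) = scs (v \<circ> \<sigma>) x (f :: ('x::finite) boolfun)"
proof -
  let ?crit = "critical_set f x (v \<circ> \<sigma>)"
  have inj: "inj \<sigma>" using assms by (rule bij_is_inj)
  have crit_vimage: "{S. ?crit (\<sigma> -` S)} = image \<sigma> ` {T. ?crit T}"
  proof (intro equalityI subsetI)
    fix S assume "S \<in> {S. ?crit (\<sigma> -` S)}"
    moreover have "S = \<sigma> ` (\<sigma> -` S)"
      using surj_image_vimage_eq[OF bij_is_surj[OF assms]] by simp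
    ultimately show "S \<in> image \<sigma> ` {T. ?crit T}" by blast
  next
    fix S assume "S \<in> image \<sigma> ` {T. ?crit T}"
    then obtain T where "S = \<sigma> ` T" "?crit T" by blast
    then show "S \<in> {S. ?crit (\<sigma> -` S)}" by (simp add: inj_vimage_image_eq[OF inj])
  qed
  have "{enat (card S) |S. ?crit (\<sigma> -` S)} = (\<lambda>T. enat (card (\<sigma> ` T))) ` {T. ?crit T}"
    unfolding setcompr_eq_image crit_vimage image_image ..
  also have "\<dots> = {enat (card T) |T. ?crit T}"
    unfolding setcompr_eq_image card_image[OF inj_on_subset[OF inj subset_UNIV]] ..
  finally show ?thesis unfolding scs_def critical_set_perm_fun[OF assms] by simp
qed

lemma share_function_antimono: "share_function \<rho> \<Longrightarrow> a \<le> b \<Longrightarrow> \<rho> b \<le> \<rho> a"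
  by (auto simp: share_function_def antimono_def)

lemma share_function_bounds: "share_function \<rho> \<Longrightarrow> 0 \<le> \<rho> k \<and> \<rho> k \<le> 1"
  using share_function_antimono[of \<rho> k \<infinity>] share_function_antimono[of \<rho> 0 k]
  by (auto simp: share_function_def)

lemma card_assignments_pos: "0 < card (UNIV :: ('x::finite) assignment set)"
  by (simp add: card_gt_0_iff)

lemma blame_bounds:
  assumes "share_function \<rho>"
  shows "0 \<le> blame \<rho> x (f :: ('x::finite) boolfun) \<and> blame \<rho> x f \<le> 1"
proof -
  have "0 \<le> (\<Sum>u\<in>(UNIV :: 'x assignment set). \<rho> (scs u x f))"
    by (rule sum_nonneg) (use share_function_bounds[OF assms] in blast)
  moreover have "(\<Sum>u\<in>(UNIV :: 'x assignment set). \<rho> (scs u x f))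
      \<le> of_nat (card (UNIV :: 'x assignment set)) * 1"
    by (rule sum_bounded_above) (use share_function_bounds[OF assms] in blast)
  ultimately show ?thesis
    using card_assignments_pos[where 'x = 'x] unfolding blame_def by (simp add: field_simps)
qed

lemma blame_eq_0_if_notin_dep:
  "share_function \<rho> \<Longrightarrow> x \<notin> dep f \<Longrightarrow> blame \<rho> x (f :: ('x::finite) boolfun) = 0"
  by (simp add: blame_def share_function_def scs_eq_infinity_if_notin_dep)

lemma blame_eq_1_if_critical_set_empty:
  assumes "share_function \<rho>" and "\<And>u. critical_set f x u {}"
  shows "blame \<rho> x (f :: ('x::finite) boolfun) = 1"
  using assms card_assignments_pos[where 'x = 'x]
  by (simp add: blame_def share_function_def scs_eq_0_if_critical_set_empty)

lemma blame_not: "blame \<rho> x (\<lambda>u. \<not> g u) = blame \<rho> x g"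
  by (simp add: blame_def scs_not)

lemma blame_flipfun: "blame \<rho> x (flipfun f y) = blame \<rho> x (f :: ('x::finite) boolfun)"
  by (simp add: blame_def scs_flipfun sum_flip_singleton[of "\<lambda>u. \<rho> (scs u x f)"])

lemma blame_perm_fun:
  assumes "bij \<sigma>"
  shows "blame \<rho> (\<sigma> x) (perm_fun \<sigma> f) = blame \<rho> x (f :: ('x::finite) boolfun)"
proof -
  have "\<sigma> \<circ> inv \<sigma> = id" "inv \<sigma> \<circ> \<sigma> = id"
    using assms by (simp_all add: fun_eq_iff bij_is_surj surj_f_inv_f bij_is_inj)
  then have "(\<Sum>v\<in>(UNIV :: 'x assignment set). \<rho> (scs (v \<circ> \<sigma>) x f)) = (\<Sum>u\<in>UNIV. \<rho> (scs u x f))"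
    by (intro sum.reindex_bij_witness[of _ "\<lambda>u. u \<circ> inv \<sigma>" "\<lambda>v. v \<circ> \<sigma>"])
      (simp_all add: o_assoc[symmetric])
  then show ?thesis unfolding blame_def scs_perm_fun[OF assms] by simp
qed

subsection \<open>The blame inequality behind ModEC\<close>

locale modec_pair =
  fixes f h g F\<^sub>0 F\<^sub>1 H\<^sub>0 H\<^sub>1 :: "'x boolfun" and x :: 'x
  assumes f_eq: "f u = (g u \<and> F\<^sub>1 u \<or> \<not> g u \<and> F\<^sub>0 u)"
    and h_eq: "h u = (g u \<and> H\<^sub>1 u \<or> \<not> g u \<and> H\<^sub>0 u)"
    and F\<^sub>0_le_H\<^sub>0: "F\<^sub>0 u \<Longrightarrow> H\<^sub>0 u"
    and H\<^sub>0_le_H\<^sub>1: "H\<^sub>0 u \<Longrightarrow> H\<^sub>1 u"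
    and H\<^sub>1_le_F\<^sub>1: "H\<^sub>1 u \<Longrightarrow> F\<^sub>1 u"
    and notin_dep: "x \<notin> dep F\<^sub>0" "x \<notin> dep F\<^sub>1" "x \<notin> dep H\<^sub>0" "x \<notin> dep H\<^sub>1"
begin

lemma cofactors_flip:
  "F\<^sub>0 (flip {x} u) = F\<^sub>0 u" "F\<^sub>1 (flip {x} u) = F\<^sub>1 u"
  "H\<^sub>0 (flip {x} u) = H\<^sub>0 u" "H\<^sub>1 (flip {x} u) = H\<^sub>1 u"
  using notin_dep by (simp_all add: flip_notin_dep)

lemma agree_if_pivotal:
  assumes "h w \<noteq> h (flip {x} w)"
  shows "f w = h w" "f (flip {x} w) = h (flip {x} w)"
  using assms f_eq[of w] f_eq[of "flip {x} w"] h_eq[of w] h_eq[of "flip {x} w"] cofactors_flip[of w]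
    F\<^sub>0_le_H\<^sub>0[of w] H\<^sub>0_le_H\<^sub>1[of w] H\<^sub>1_le_F\<^sub>1[of w]
  by (smt (verit))+

lemma flip_eq_if_g_flip_eq:
  assumes "g (flip {x} u) = g u"
  shows "f (flip {x} u) = f u" "h (flip {x} u) = h u"
  using assms by (simp_all add: f_eq h_eq cofactors_flip)

lemma critical_set_if_agree:
  assumes "f u = h u" and "critical_set h x u S"
  shows "critical_set f x u S"
proof -
  let ?w = "flip S u"
  have h_w: "h u = h ?w" "h u \<noteq> h (flip {x} ?w)"
    using assms(2) by (auto simp: critical_set_iff)
  then have "f ?w = h ?w" "f (flip {x} ?w) = h (flip {x} ?w)"
    using agree_if_pivotal[of ?w] by simp_all
  then show ?thesis using assms h_w by (simp add: critical_set_iff)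
qed

lemma pivotal_if_g_flips:
  assumes "f u \<noteq> h u" and "g (flip {x} u) \<noteq> g u"
  shows "f (flip {x} u) \<noteq> f u"
  using assms f_eq[of u] f_eq[of "flip {x} u"] h_eq[of u] cofactors_flip[of u]
    F\<^sub>0_le_H\<^sub>0[of u] H\<^sub>0_le_H\<^sub>1[of u] H\<^sub>1_le_F\<^sub>1[of u]
  by (smt (verit))

lemma critical_set_if_critical_set_flip:
  assumes "f u \<noteq> h u" and "g (flip {x} u) = g u" and "critical_set h x (flip {x} u) S"
  shows "critical_set f x u S"
proof -
  let ?w = "flip S u"
  have flip_w: "flip S (flip {x} u) = flip {x} ?w"
    by (rule flip_commute)
  have h_w: "h u = h (flip {x} ?w)" "h u \<noteq> h ?w"
    using assms(3) flip_eq_if_g_flip_eq(2)[OF assms(2)] by (auto simp: critical_set_iff flip_w)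
  then have "f ?w = h ?w" "f (flip {x} ?w) = h (flip {x} ?w)"
    using agree_if_pivotal[of ?w] by simp_all
  then show ?thesis
    using assms(1,3) h_w by (auto simp: critical_set_iff)
qed

lemma share_pair_le_if_differ:
  assumes "share_function \<rho>" and "f u \<noteq> h u"
  shows "\<rho> (scs u x h) + \<rho> (scs (flip {x} u) x h) \<le> \<rho> (scs u x f) + \<rho> (scs (flip {x} u) x f)"
proof (cases "g (flip {x} u) = g u")
  case True
  have "f (flip {x} u) \<noteq> h (flip {x} u)"
    using assms(2) flip_eq_if_g_flip_eq[OF True] by simp
  moreover have "g (flip {x} (flip {x} u)) = g (flip {x} u)"
    using True by simp
  ultimately have "scs u x f \<le> scs (flip {x} u) x h" "scs (flip {x} u) x f \<le> scs u x h"
    using critical_set_if_critical_set_flip[OF assms(2) True]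
      critical_set_if_critical_set_flip[of "flip {x} u"]
    by (auto intro: scs_le_if_critical_set_imp)
  then show ?thesis
    using share_function_antimono[OF assms(1)] by (smt (verit))
next
  case False
  then have "f (flip {x} u) \<noteq> f u"
    using pivotal_if_g_flips[OF assms(2)] by blast
  then have "scs u x f = 0" "scs (flip {x} u) x f = 0"
    by (simp_all add: scs_eq_0_if_critical_set_empty critical_set_empty_iff)
  moreover have "\<rho> 0 = 1" using assms(1) by (simp add: share_function_def)
  ultimately show ?thesis
    using share_function_bounds[OF assms(1), of "scs u x h"]
      share_function_bounds[OF assms(1), of "scs (flip {x} u) x h"]
    by simp
qed

lemma share_pair_le:
  assumes "share_function \<rho>"
  shows "\<rho> (scs u x h) + \<rho> (scs (flip {x} u) x h) \<le> \<rho> (scs u x f) + \<rho> (scs (flip {x} u) x f)"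
proof (cases "f u = h u \<and> f (flip {x} u) = h (flip {x} u)")
  case True
  then have "scs u x f \<le> scs u x h" "scs (flip {x} u) x f \<le> scs (flip {x} u) x h"
    by (auto intro: scs_le_if_critical_set_imp critical_set_if_agree)
  then show ?thesis
    using share_function_antimono[OF assms] by (smt (verit))
next
  case False
  then show ?thesis
    using share_pair_le_if_differ[OF assms, of u] share_pair_le_if_differ[OF assms, of "flip {x} u"]
    by auto
qed

end

lemma blame_le_if_modec_pair:
  fixes f h :: "('x::finite) boolfun"
  assumes "modec_pair f h g F\<^sub>0 F\<^sub>1 H\<^sub>0 H\<^sub>1 x" and "share_function \<rho>"
  shows "blame \<rho> x h \<le> blame \<rho> x f"
proof -
  have "2 * (\<Sum>u\<in>(UNIV :: 'x assignment set). \<rho> (scs u x h))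
      = (\<Sum>u\<in>UNIV. \<rho> (scs u x h) + \<rho> (scs (flip {x} u) x h))"
    by (simp add: sum.distrib sum_flip_singleton[of "\<lambda>u. \<rho> (scs u x h)"])
  also have "\<dots> \<le> (\<Sum>u\<in>UNIV. \<rho> (scs u x f) + \<rho> (scs (flip {x} u) x f))"
    by (intro sum_mono modec_pair.share_pair_le[OF assms])
  also have "\<dots> = 2 * (\<Sum>u\<in>(UNIV :: 'x assignment set). \<rho> (scs u x f))"
    by (simp add: sum.distrib sum_flip_singleton[of "\<lambda>u. \<rho> (scs u x f)"])
  finally show ?thesis
    unfolding blame_def by (simp add: divide_right_mono)
qed

lemma blame_mono_modular:
  fixes f g h :: "('x::finite) boolfun"
  assumes "share_function \<rho>" and "mono_modular f g" and "mono_modular h g"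
    and "mod_cof h g True \<le> mod_cof f g True" and "mod_cof f g False \<le> mod_cof h g False"
    and "x \<in> dep g"
  shows "blame \<rho> x h \<le> blame \<rho> x f"
proof -
  obtain l z where f_wit: "mod_witness f g l z" and "nonconstant g"
    using assms(2) unfolding mono_modular_def by blast
  obtain l' z' where h_wit: "mod_witness h g l' z'" and "monotone_in l' z'"
    using assms(3) unfolding mono_modular_def by blast
  have "x \<notin> dep l" "x \<notin> dep l'"
    using f_wit h_wit \<open>x \<in> dep g\<close> unfolding mod_witness_def by blast+
  then have x_indep: "x \<notin> dep (cof l z c)" "x \<notin> dep (cof l' z' c)" for c
    using dep_cof_subset[of l z c] dep_cof_subset[of l' z' c] by blast+
  have cof_le: "cof l' z' True \<le> cof l z True" "cof l z False \<le> cof l' z' False"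
    using assms(4,5) by (simp_all add: mod_cof_eq[OF f_wit \<open>nonconstant g\<close>]
        mod_cof_eq[OF h_wit \<open>nonconstant g\<close>])
  have "modec_pair f h g (cof l z False) (cof l z True) (cof l' z' False) (cof l' z' True) x"
  proof
    fix u
    show "f u = (g u \<and> cof l z True u \<or> \<not> g u \<and> cof l z False u)"
      using f_wit by (simp add: mod_witness_def subst_def)
    show "h u = (g u \<and> cof l' z' True u \<or> \<not> g u \<and> cof l' z' False u)"
      using h_wit by (simp add: mod_witness_def subst_def)
    show "cof l z False u \<Longrightarrow> cof l' z' False u" "cof l' z' True u \<Longrightarrow> cof l z True u"
      using cof_le by (auto simp: le_fun_def)
    show "cof l' z' False u \<Longrightarrow> cof l' z' True u"
      using \<open>monotone_in l' z'\<close> by (simp add: monotone_in_def)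
  qed (use x_indep in simp_all)
  then show ?thesis using assms(1) by (rule blame_le_if_modec_pair)
qed

theorem mainTheorem3:
  fixes \<rho> :: "enat \<Rightarrow> real"
  assumes "share_function \<rho>"
  shows "IVF (blame \<rho> :: ('x::finite) value_fun) \<and> unbiased (blame \<rho> :: 'x value_fun)"
proof
  have "critical_set (\<lambda>u. u x) x u {}" "critical_set (\<lambda>u. \<not> u x) x u {}" for u and x :: 'x
    by (simp_all add: critical_set_empty_iff flip_def)
  then show "IVF (blame \<rho> :: 'x value_fun)"
    unfolding IVF_def
    using blame_bounds[OF assms] blame_eq_0_if_notin_dep[OF assms]
      blame_eq_1_if_critical_set_empty[OF assms] blame_perm_fun blame_flipfun
      blame_mono_modular[OF assms]
    by metis
  show "unbiased (blame \<rho> :: 'x value_fun)"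
    unfolding unbiased_def by (simp add: blame_not)
qed

end
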